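(* Let $X$ and $Y$ be non-trivial Banach spaces, $r,s\in(0,1]$, and $\kappa$ a cardinal. If $X$ is $(r,s)$-$\mathrm{SQ}_{<\kappa}$, then $X\oplus_\infty Y$ is $(r,s)$-$\mathrm{SQ}_{<\kappa}$.
   Context: $X\oplus_\infty Y$ is $X\times Y$ with norm $\max\{\|x\|,\|y\|\}$. A Banach space $Z$ is $(r,s)$-$\mathrm{SQ}_{<\kappa}$ if for every set $A\subset S_Z$ with $|A|<\kappa$ there exists $y\in S_Z$ with $\|rx\pm sy\|\le 1$ for all $x\in A$. *)

theory Defs
  imports "HOL-Analysis.Analysis"
begin

text \<open>The unit sphere is the set of vectors of N-norm 1; kappa is a cardinal,
  represented as a cardinal order relation on some type.\<close>
definition SQ_wrt :: "('v::real_vector \<Rightarrow> real) \<Rightarrow> real \<Rightarrow> real \<Rightarrow> 'k rel \<Rightarrow> bool" where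
  "SQ_wrt N r s \<kappa> \<longleftrightarrow>
     (\<forall>A. A \<subseteq> {x. N x = 1} \<and> (card_of A, \<kappa>) \<in> ordLess \<longrightarrow>
        (\<exists>y. N y = 1 \<and> (\<forall>x\<in>A. N (r *\<^sub>R x + s *\<^sub>R y) \<le> 1 \<and> N (r *\<^sub>R x - s *\<^sub>R y) \<le> 1)))"

definition SQ :: "'v::real_normed_vector itself \<Rightarrow> real \<Rightarrow> real \<Rightarrow> 'k rel \<Rightarrow> bool" where
  "SQ _ r s \<kappa> \<longleftrightarrow> SQ_wrt (norm :: 'v \<Rightarrow> real) r s \<kappa>"

definition linf_norm :: "('a::real_normed_vector \<times> 'b::real_normed_vector) \<Rightarrow> real" where
  "linf_norm z = max (norm (fst z)) (norm (snd z))"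

end

theory Submission
  imports Defs
begin

text \<open>Normalise the first coordinates of the given set to get a set of the same size on the
  unit sphere of \<open>X\<close>, and let \<open>u\<close> be an SQ-witness for it in \<open>X\<close>; then \<open>(u, 0)\<close> is a witness in
  \<open>X \<oplus>\<^sub>\<infinity> Y\<close>. For \<open>x\<close> in the unit ball of \<open>X\<close>, \<open>r x \<plusminus> s u\<close> is a convex combination of
  \<open>r sgn x \<plusminus> s u\<close> and \<open>\<plusminus> s u\<close>, both of norm at most 1, while the second coordinate
  \<open>r y\<close> has norm at most 1 trivially.\<close>

lemma norm_scaleR_add_le_one_if_sgn:
  fixes x u :: "'a::real_normed_vector"
  assumes sgn_bound: "x \<noteq> 0 \<Longrightarrow> norm (r *\<^sub>R sgn x + u) \<le> 1"
    and "norm u \<le> 1" "norm x \<le> 1"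
  shows "norm (r *\<^sub>R x + u) \<le> 1"
proof (cases "x = 0")
  case True
  then show ?thesis using assms by simp
next
  case False
  have "r *\<^sub>R x + u = norm x *\<^sub>R (r *\<^sub>R sgn x + u) + (1 - norm x) *\<^sub>R u"
    using False by (simp add: sgn_div_norm algebra_simps)
  moreover have "norm x *\<^sub>R (r *\<^sub>R sgn x + u) + (1 - norm x) *\<^sub>R u \<in> cball 0 1"
    using convex_cball[of "0::'a" 1] sgn_bound[OF False] assms(2,3)
    by (intro convexD) auto
  ultimately show ?thesis by simp
qed

lemma card_of_image_ordLess:
  assumes "B \<subseteq> A" "(card_of A, \<kappa>) \<in> ordLess"
  shows "(card_of (f ` B), \<kappa>) \<in> ordLess"
proof -
  have "(card_of (f ` B), card_of B) \<in> ordLeq" by (rule card_of_image)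
  moreover have "(card_of B, card_of A) \<in> ordLeq" using assms(1) by (rule card_of_mono1)
  ultimately show ?thesis
    using assms(2) ordLeq_transitive ordLeq_ordLess_trans by blast
qed

lemma SQ_wrt_linf_norm:
  fixes r s :: real and \<kappa> :: "'k rel"
  assumes "\<bar>r\<bar> \<le> 1" "\<bar>s\<bar> \<le> 1"
    and SQ_X: "SQ_wrt (norm :: 'a::real_normed_vector \<Rightarrow> real) r s \<kappa>"
  shows "SQ_wrt (linf_norm :: 'a \<times> 'b::real_normed_vector \<Rightarrow> real) r s \<kappa>"
  unfolding SQ_wrt_def
proof (intro allI impI)
  fix A :: "('a \<times> 'b) set"
  assume A: "A \<subseteq> {z. linf_norm z = 1} \<and> (card_of A, \<kappa>) \<in> ordLess"
  define A\<^sub>1 where "A\<^sub>1 = (sgn \<circ> fst) ` {z \<in> A. fst z \<noteq> 0}"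
  have "A\<^sub>1 \<subseteq> {x. norm x = 1}"
    unfolding A\<^sub>1_def by (auto simp: norm_sgn)
  moreover have "(card_of A\<^sub>1, \<kappa>) \<in> ordLess"
    unfolding A\<^sub>1_def using A by (intro card_of_image_ordLess[of _ A]) auto
  ultimately obtain u :: 'a where u: "norm u = 1"
    and u_SQ: "\<And>x. x \<in> A\<^sub>1 \<Longrightarrow> norm (r *\<^sub>R x + s *\<^sub>R u) \<le> 1 \<and> norm (r *\<^sub>R x - s *\<^sub>R u) \<le> 1"
    using SQ_X unfolding SQ_wrt_def by blast
  have "linf_norm (r *\<^sub>R (x, y) + s *\<^sub>R (u, 0)) \<le> 1 \<and> linf_norm (r *\<^sub>R (x, y) - s *\<^sub>R (u, 0)) \<le> 1"
    if "(x, y) \<in> A" for x y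
  proof -
    have "max (norm x) (norm y) = 1"
      using A that unfolding linf_norm_def by auto
    then have xy: "norm x \<le> 1" "norm y \<le> 1" by linarith+
    have sgn_x: "sgn x \<in> A\<^sub>1" if "x \<noteq> 0"
      unfolding A\<^sub>1_def using \<open>(x, y) \<in> A\<close> that by (intro image_eqI[of _ _ "(x, y)"]) auto
    have "norm (r *\<^sub>R x + s *\<^sub>R u) \<le> 1"
      by (rule norm_scaleR_add_le_one_if_sgn) (use u_SQ[OF sgn_x] u xy \<open>\<bar>s\<bar> \<le> 1\<close> in auto)
    moreover have "norm (r *\<^sub>R x + - (s *\<^sub>R u)) \<le> 1"
      by (rule norm_scaleR_add_le_one_if_sgn) (use u_SQ[OF sgn_x] u xy \<open>\<bar>s\<bar> \<le> 1\<close> in auto)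
    moreover have "norm (r *\<^sub>R y) \<le> 1"
      using xy \<open>\<bar>r\<bar> \<le> 1\<close> by (simp add: mult_le_one)
    ultimately show ?thesis by (simp add: linf_norm_def)
  qed
  moreover have "linf_norm (u, 0::'b) = 1" using u by (simp add: linf_norm_def)
  ultimately show "\<exists>z. linf_norm z = 1 \<and>
      (\<forall>w\<in>A. linf_norm (r *\<^sub>R w + s *\<^sub>R z) \<le> 1 \<and> linf_norm (r *\<^sub>R w - s *\<^sub>R z) \<le> 1)"
    by (intro exI[of _ "(u, 0)"]) auto
qed

theorem proposition6p6:
  fixes r s :: real and \<kappa> :: "'k rel"
  assumes "Card_order \<kappa>"
    and "\<exists>x::'a::banach. x \<noteq> 0"
    and "\<exists>y::'b::banach. y \<noteq> 0"
    and "0 < r" "r \<le> 1" "0 < s" "s \<le> 1"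
    and "SQ TYPE('a) r s \<kappa>"
  shows "SQ_wrt (linf_norm :: 'a \<times> 'b \<Rightarrow> real) r s \<kappa>"
  using assms(4-8) by (intro SQ_wrt_linf_norm) (auto simp: SQ_def)

end
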